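(* Let $\mathbb P=\langle P,<\rangle$ be a strict partial order with $|P|=\kappa\ge\omega$ satisfying (u1) for all nonempty $L,G\in[P]^{<\kappa}$ with $L<G$ there is $x\in P$ with $L<x<G$; (u2) for every nonempty $K\in[P]^{<\kappa}$ there are $x,y,z\in P$ with $x<K$, $y>K$ and $z\parallel K$. Let $L,G,K\in[P]^{<\kappa}$ be nonempty with $L<G$. Then: (a) $|\{x\in P:L<x<G\}|=\kappa$; (b) $|\{x\in P:x<K\}|=|\{x\in P:x>K\}|=|\{x\in P:x\parallel K\}|=\kappa$; (c) if $\kappa$ is a regular cardinal, then $\mathbb P$ is not reversible. (d) Consequently, if $\kappa$ is a regular infinite cardinal and $\mathbb P$ is a $\kappa$-homogeneous-universal poset of size $\kappa$, then $\mathbb P$ is not reversible (in particular, the countable random poset is not reversible).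
   Context: $[P]^{<\kappa}$ is the set of subsets of $P$ of size $<\kappa$. For $p,q\in P$, $p\parallel q$ means $p\not\le q$ and $q\not\le p$. For $A,B\subseteq P$, $A<B$ means $a<b$ for all $a\in A,b\in B$; $x<K$ means $\{x\}<K$, etc., and $z\parallel K$ means $z\parallel k$ for all $k\in K$. A structure is reversible iff every bijective homomorphism from it onto itself (i.e. bijection $F:P\to P$ with $p<q\Rightarrow F(p)<F(q)$) is an automorphism. A poset $\mathbb P$ of size $\kappa$ is $\kappa$-homogeneous-universal iff every isomorphism between substructures of $\mathbb P$ of size $<\kappa$ extends to an automorphism of $\mathbb P$, and every poset of size $\le\kappa$ embeds into $\mathbb P$. *)

theory Defs
  imports Main
begin

definition strict_po :: "'a set \<Rightarrow> ('a \<Rightarrow> 'a \<Rightarrow> bool) \<Rightarrow> bool" where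
  "strict_po P r \<longleftrightarrow> (\<forall>x\<in>P. \<not> r x x) \<and>
     (\<forall>x\<in>P. \<forall>y\<in>P. \<forall>z\<in>P. r x y \<longrightarrow> r y z \<longrightarrow> r x z)"

definition incomp :: "('a \<Rightarrow> 'a \<Rightarrow> bool) \<Rightarrow> 'a \<Rightarrow> 'a \<Rightarrow> bool" where
  "incomp r p q \<longleftrightarrow> \<not> (p = q \<or> r p q) \<and> \<not> (q = p \<or> r q p)"

definition set_less :: "('a \<Rightarrow> 'a \<Rightarrow> bool) \<Rightarrow> 'a set \<Rightarrow> 'a set \<Rightarrow> bool" where
  "set_less r A B \<longleftrightarrow> (\<forall>a\<in>A. \<forall>b\<in>B. r a b)"

definition small_subset :: "'a set \<Rightarrow> 'a set \<Rightarrow> bool" where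
  "small_subset P A \<longleftrightarrow> A \<subseteq> P \<and> (card_of A, card_of P) \<in> ordLess"

definition cond_u1 :: "'a set \<Rightarrow> ('a \<Rightarrow> 'a \<Rightarrow> bool) \<Rightarrow> bool" where
  "cond_u1 P r \<longleftrightarrow> (\<forall>L G. small_subset P L \<and> small_subset P G \<and> L \<noteq> {} \<and> G \<noteq> {}
      \<and> set_less r L G \<longrightarrow> (\<exists>x\<in>P. set_less r L {x} \<and> set_less r {x} G))"

definition cond_u2 :: "'a set \<Rightarrow> ('a \<Rightarrow> 'a \<Rightarrow> bool) \<Rightarrow> bool" where
  "cond_u2 P r \<longleftrightarrow> (\<forall>K. small_subset P K \<and> K \<noteq> {} \<longrightarrow>
      (\<exists>x\<in>P. \<exists>y\<in>P. \<exists>z\<in>P. set_less r {x} K \<and> set_less r K {y} \<and> (\<forall>k\<in>K. incomp r z k)))"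

definition bij_hom :: "'a set \<Rightarrow> ('a \<Rightarrow> 'a \<Rightarrow> bool) \<Rightarrow> ('a \<Rightarrow> 'a) \<Rightarrow> bool" where
  "bij_hom P r F \<longleftrightarrow> bij_betw F P P \<and> (\<forall>p\<in>P. \<forall>q\<in>P. r p q \<longrightarrow> r (F p) (F q))"

definition automorphism :: "'a set \<Rightarrow> ('a \<Rightarrow> 'a \<Rightarrow> bool) \<Rightarrow> ('a \<Rightarrow> 'a) \<Rightarrow> bool" where
  "automorphism P r F \<longleftrightarrow> bij_betw F P P \<and> (\<forall>p\<in>P. \<forall>q\<in>P. r p q \<longleftrightarrow> r (F p) (F q))"

definition reversible :: "'a set \<Rightarrow> ('a \<Rightarrow> 'a \<Rightarrow> bool) \<Rightarrow> bool" where
  "reversible P r \<longleftrightarrow> (\<forall>F. bij_hom P r F \<longrightarrow> automorphism P r F)"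

definition sub_iso :: "('a \<Rightarrow> 'a \<Rightarrow> bool) \<Rightarrow> 'a set \<Rightarrow> 'a set \<Rightarrow> ('a \<Rightarrow> 'a) \<Rightarrow> bool" where
  "sub_iso r A B f \<longleftrightarrow> bij_betw f A B \<and> (\<forall>a\<in>A. \<forall>a'\<in>A. r a a' \<longleftrightarrow> r (f a) (f a'))"

definition order_embedding :: "'b set \<Rightarrow> ('b \<Rightarrow> 'b \<Rightarrow> bool) \<Rightarrow> 'a set \<Rightarrow> ('a \<Rightarrow> 'a \<Rightarrow> bool) \<Rightarrow> ('b \<Rightarrow> 'a) \<Rightarrow> bool" where
  "order_embedding Q s P r f \<longleftrightarrow> inj_on f Q \<and> f ` Q \<subseteq> P \<and>
     (\<forall>a\<in>Q. \<forall>b\<in>Q. s a b \<longleftrightarrow> r (f a) (f b))"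

(* Every poset of size \<le> \<kappa> is isomorphic to one whose
   carrier is a subset of the ambient type of P (as |P| = \<kappa>), so quantifying over such
   posets covers all posets of size \<le> \<kappa> up to isomorphism. *)
definition homogeneous_universal :: "'a set \<Rightarrow> ('a \<Rightarrow> 'a \<Rightarrow> bool) \<Rightarrow> bool" where
  "homogeneous_universal P r \<longleftrightarrow>
     (\<forall>A B f. small_subset P A \<and> small_subset P B \<and> sub_iso r A B f \<longrightarrow>
        (\<exists>F. automorphism P r F \<and> (\<forall>a\<in>A. F a = f a))) \<and>
     (\<forall>(Q::'a set) s. (card_of Q, card_of P) \<in> ordLeq \<and> strict_po Q s \<longrightarrow> (\<exists>g. order_embedding Q s P r g))"

end

theory Submission
  imports Defs
begin

text \<open>An element realising (u1) or (u2) for K can be found outside any prescribed small set T: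
  apply the condition to K enlarged by the part of T that already realises it, and
  irreflexivity keeps the new witness out of T. Hence each of the sets in (a) and (b) has size \<kappa>.

  For (c), enumerate P in order type \<kappa> and build by back and forth a chain of small injective
  homomorphic partial maps, starting from a \<mapsto> a, z \<mapsto> y with z \<parallel> a < y. Forth, a new point
  is sent into the interval spanned by the images of its predecessors and successors, avoiding
  the current range; back, a new point of the range gets a preimage incomparable with the whole
  current domain, which imposes no constraint. Regularity of \<kappa> keeps the stages small. The union
  is a bijective homomorphism mapping the incomparable pair a, z onto the comparable pair a, y.

  For (d), a \<kappa>-homogeneous-universal poset satisfies (u1) and (u2), because every cut over a
  small subset is realised.\<close>

unbundle cardinal_syntax

lemma small_subset_mono: "A \<subseteq> B \<Longrightarrow> small_subset P B \<Longrightarrow> small_subset P A"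
  unfolding small_subset_def using card_of_mono1 ordLeq_ordLess_trans by blast

lemma small_subset_Un:
  "infinite P \<Longrightarrow> small_subset P A \<Longrightarrow> small_subset P B \<Longrightarrow> small_subset P (A \<union> B)"
  unfolding small_subset_def using card_of_Un_ordLess_infinite by blast

lemma small_subset_Domain:
  assumes "U \<subseteq> P \<times> P" and "|U| <o |P|" shows "small_subset P (Domain U)"
proof -
  have "|fst ` U| <o |P|" using ordLeq_ordLess_trans[OF card_of_image assms(2)] .
  then show ?thesis using assms(1) unfolding small_subset_def fst_eq_Domain by blast
qed

lemma small_subset_Range:
  assumes "U \<subseteq> P \<times> P" and "|U| <o |P|" shows "small_subset P (Range U)"
proof -
  have "|snd ` U| <o |P|" using ordLeq_ordLess_trans[OF card_of_image assms(2)] .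
  then show ?thesis using assms(1) unfolding small_subset_def snd_eq_Range by blast
qed

lemma finite_ordLess_infinite_card_of: "finite A \<Longrightarrow> infinite B \<Longrightarrow> |A| <o |B|"
  using finite_ordLess_infinite[of "|A|" "|B|"]
  by (simp add: card_of_Well_order Field_card_of card_of_well_order_on)

lemma small_subset_finite: "infinite P \<Longrightarrow> finite A \<Longrightarrow> A \<subseteq> P \<Longrightarrow> small_subset P A"
  unfolding small_subset_def by (simp add: finite_ordLess_infinite_card_of)

lemma ordLess_insert_infinite: "infinite P \<Longrightarrow> |U| <o |P| \<Longrightarrow> |insert x U| <o |P|"
  using card_of_Un_ordLess_infinite[of P "{x}" U] finite_ordLess_infinite_card_of[of "{x}" P]
  by simp

lemma ex_not_in_small_subset:
  assumes "small_subset P T" shows "\<exists>x\<in>P. x \<notin> T"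
proof (rule ccontr)
  assume "\<not> ?thesis"
  then have "|P| \<le>o |T|" by (simp add: card_of_mono1 subset_iff)
  with assms show False
    unfolding small_subset_def using not_ordLess_ordLeq by blast
qed

lemma ordIso_if_not_covered_by_small:
  assumes "S \<subseteq> P" and "\<And>T. small_subset P T \<Longrightarrow> \<exists>x\<in>S. x \<notin> T"
  shows "|S| =o |P|"
proof -
  have "\<not> small_subset P S" using assms(2) by blast
  then show ?thesis
    using assms(1) card_of_mono1 ordLeq_iff_ordLess_or_ordIso
    unfolding small_subset_def by blast
qed

text \<open>Apply the hypothesis to K \<union> (S \<inter> T), where S is the set of witnesses for K: the witness
  obtained lies in S and is R-related to every element of S \<inter> T, so irreflexivity of R keeps it
  out of T.\<close>
lemma witness_avoiding_small:
  assumes "infinite P" and irrefl: "\<And>x. x \<in> P \<Longrightarrow> \<not> R x x"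
    and witness: "\<And>K'. small_subset P K' \<Longrightarrow> K \<subseteq> K' \<Longrightarrow>
      K' \<subseteq> K \<union> {x\<in>P. \<Phi> x \<and> (\<forall>k\<in>K. R x k)} \<Longrightarrow> \<exists>x\<in>P. \<Phi> x \<and> (\<forall>k\<in>K'. R x k)"
    and K: "small_subset P K" and T: "small_subset P T"
  shows "\<exists>x\<in>P. x \<notin> T \<and> \<Phi> x \<and> (\<forall>k\<in>K. R x k)"
proof -
  define S where "S = {x\<in>P. \<Phi> x \<and> (\<forall>k\<in>K. R x k)}"
  have "small_subset P (S \<inter> T)" using small_subset_mono[OF _ T] by blast
  then have "small_subset P (K \<union> (S \<inter> T))" using small_subset_Un[OF assms(1) K] by blast
  then obtain x where x: "x \<in> P" "\<Phi> x" "\<forall>k\<in>K \<union> (S \<inter> T). R x k"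
    using witness[of "K \<union> (S \<inter> T)"] unfolding S_def by blast
  then have "x \<in> S" unfolding S_def by blast
  with x irrefl show ?thesis by blast
qed

locale saturated_poset =
  fixes P :: "'a set" and r :: "'a \<Rightarrow> 'a \<Rightarrow> bool"
  assumes strict_po: "strict_po P r" and infinite: "infinite P"
    and u1: "cond_u1 P r" and u2: "cond_u2 P r"
begin

lemma less_irrefl: "x \<in> P \<Longrightarrow> \<not> r x x"
  using strict_po unfolding strict_po_def by blast

lemma less_trans: "x \<in> P \<Longrightarrow> y \<in> P \<Longrightarrow> z \<in> P \<Longrightarrow> r x y \<Longrightarrow> r y z \<Longrightarrow> r x z"
  using strict_po unfolding strict_po_def by blast

lemma u2_witnesses:
  assumes "small_subset P K" and "K \<noteq> {}"
  shows "\<exists>x\<in>P. \<forall>k\<in>K. r x k" and "\<exists>y\<in>P. \<forall>k\<in>K. r k y"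
    and "\<exists>z\<in>P. \<forall>k\<in>K. incomp r z k"
proof -
  have "\<exists>x\<in>P. \<exists>y\<in>P. \<exists>z\<in>P. set_less r {x} K \<and> set_less r K {y} \<and> (\<forall>k\<in>K. incomp r z k)"
    using u2 assms unfolding cond_u2_def by blast
  then show "\<exists>x\<in>P. \<forall>k\<in>K. r x k" and "\<exists>y\<in>P. \<forall>k\<in>K. r k y"
    and "\<exists>z\<in>P. \<forall>k\<in>K. incomp r z k"
    unfolding set_less_def by blast+
qed

lemma u1_between:
  assumes "small_subset P L" and "small_subset P G" and "L \<noteq> {}" and "G \<noteq> {}"
    and "set_less r L G"
  shows "\<exists>x\<in>P. set_less r L {x} \<and> set_less r {x} G"
  using u1 assms unfolding cond_u1_def by simp

lemma below_avoiding:
  assumes "small_subset P K" and "small_subset P T"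
  shows "\<exists>x\<in>P. x \<notin> T \<and> set_less r {x} K"
proof (cases "K = {}")
  case True
  then show ?thesis using ex_not_in_small_subset[OF assms(2)] by (simp add: set_less_def)
next
  case False
  have "\<exists>x\<in>P. x \<notin> T \<and> True \<and> (\<forall>k\<in>K. r x k)"
  proof (rule witness_avoiding_small[where \<Phi> = "\<lambda>_. True", OF infinite less_irrefl _ assms])
    fix K' assume "small_subset P K'" "K \<subseteq> K'"
    then show "\<exists>x\<in>P. True \<and> (\<forall>k\<in>K'. r x k)" using False u2_witnesses(1) by blast
  qed
  then show ?thesis by (simp add: set_less_def)
qed

lemma above_avoiding:
  assumes "small_subset P K" and "small_subset P T"
  shows "\<exists>x\<in>P. x \<notin> T \<and> set_less r K {x}"
proof (cases "K = {}")
  case True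
  then show ?thesis using ex_not_in_small_subset[OF assms(2)] by (simp add: set_less_def)
next
  case False
  have "\<exists>x\<in>P. x \<notin> T \<and> True \<and> (\<forall>k\<in>K. r k x)"
  proof (rule witness_avoiding_small[where \<Phi> = "\<lambda>_. True" and R = "\<lambda>x k. r k x",
        OF infinite less_irrefl _ assms])
    fix K' assume "small_subset P K'" "K \<subseteq> K'"
    then show "\<exists>x\<in>P. True \<and> (\<forall>k\<in>K'. r k x)" using False u2_witnesses(2) by blast
  qed
  then show ?thesis by (simp add: set_less_def)
qed

lemma incomparable_avoiding:
  assumes "small_subset P K" and "small_subset P T"
  shows "\<exists>x\<in>P. x \<notin> T \<and> (\<forall>k\<in>K. incomp r x k)"
proof (cases "K = {}")
  case True
  then show ?thesis using ex_not_in_small_subset[OF assms(2)] by simp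
next
  case False
  have "\<exists>x\<in>P. x \<notin> T \<and> True \<and> (\<forall>k\<in>K. incomp r x k)"
  proof (rule witness_avoiding_small[where \<Phi> = "\<lambda>_. True", OF infinite _ _ assms])
    show "\<not> incomp r x x" for x by (simp add: incomp_def)
    fix K' assume "small_subset P K'" "K \<subseteq> K'"
    then show "\<exists>x\<in>P. True \<and> (\<forall>k\<in>K'. incomp r x k)" using False u2_witnesses(3) by blast
  qed
  then show ?thesis by simp
qed

lemma between_avoiding:
  assumes L: "small_subset P L" and G: "small_subset P G" and LG: "set_less r L G"
    and T: "small_subset P T"
  shows "\<exists>x\<in>P. x \<notin> T \<and> set_less r L {x} \<and> set_less r {x} G"
proof -
  consider "G = {}" | "L = {}" | "L \<noteq> {}" "G \<noteq> {}" by blast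
  then show ?thesis
  proof cases
    case 1
    then show ?thesis using above_avoiding[OF L T] by (simp add: set_less_def)
  next
    case 2
    then show ?thesis using below_avoiding[OF G T] by (simp add: set_less_def)
  next
    case 3
    have "\<exists>x\<in>P. x \<notin> T \<and> set_less r L {x} \<and> (\<forall>k\<in>G. r x k)"
    proof (rule witness_avoiding_small[OF infinite less_irrefl _ G T])
      fix K' assume K': "small_subset P K'" "G \<subseteq> K'"
        "K' \<subseteq> G \<union> {x\<in>P. set_less r L {x} \<and> (\<forall>k\<in>G. r x k)}"
      have "set_less r L K'" using LG K'(3) unfolding set_less_def by blast
      moreover have "K' \<noteq> {}" using K'(2) 3 by blast
      ultimately obtain x where "x \<in> P" "set_less r L {x}" "set_less r {x} K'"
        using u1_between[OF L K'(1) 3(1)] by blast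
      then show "\<exists>x\<in>P. set_less r L {x} \<and> (\<forall>k\<in>K'. r x k)"
        unfolding set_less_def by blast
    qed
    then show ?thesis by (simp add: set_less_def)
  qed
qed

lemma card_between:
  assumes "small_subset P L" and "small_subset P G" and "set_less r L G"
  shows "|{x\<in>P. set_less r L {x} \<and> set_less r {x} G}| =o |P|"
proof (rule ordIso_if_not_covered_by_small)
  fix T assume "small_subset P T"
  then show "\<exists>x\<in>{x\<in>P. set_less r L {x} \<and> set_less r {x} G}. x \<notin> T"
    using between_avoiding[OF assms] by blast
qed blast

lemma card_below: "small_subset P K \<Longrightarrow> |{x\<in>P. set_less r {x} K}| =o |P|"
  using below_avoiding by (intro ordIso_if_not_covered_by_small) blast+

lemma card_above: "small_subset P K \<Longrightarrow> |{x\<in>P. set_less r K {x}}| =o |P|"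
  using above_avoiding by (intro ordIso_if_not_covered_by_small) blast+

lemma card_incomparable: "small_subset P K \<Longrightarrow> |{x\<in>P. \<forall>k\<in>K. incomp r x k}| =o |P|"
  using incomparable_avoiding by (intro ordIso_if_not_covered_by_small) blast+

end

locale transfinite_exhaustion =
  fixes P :: "'a set" and good :: "'b set \<Rightarrow> bool" and handled :: "'b set \<Rightarrow> 'a \<Rightarrow> bool"
    and U0 :: "'b set"
  assumes infinite: "infinite P" and regular: "regularCard |P|"
    and good_start: "good U0" and small_start: "|U0| <o |P|"
    and good_Union: "\<And>\<C>. \<C> \<noteq> {} \<Longrightarrow> chain\<^sub>\<subseteq> \<C> \<Longrightarrow> \<forall>X\<in>\<C>. good X \<Longrightarrow> good (\<Union>\<C>)"
    and extend: "\<And>U a. good U \<Longrightarrow> |U| <o |P| \<Longrightarrow> a \<in> P \<Longrightarrow>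
      \<exists>V. U \<subseteq> V \<and> good V \<and> |V| <o |P| \<and> handled V a"
    and handled_mono: "\<And>U V a. handled U a \<Longrightarrow> U \<subseteq> V \<Longrightarrow> handled V a"
begin

text \<open>The implication makes the choice possible for every U, so that U \<subseteq> extension U a holds
  unconditionally.\<close>
definition extension :: "'b set \<Rightarrow> 'a \<Rightarrow> 'b set" where
  "extension U a = (SOME V. U \<subseteq> V \<and>
     (good U \<and> |U| <o |P| \<and> a \<in> P \<longrightarrow> good V \<and> |V| <o |P| \<and> handled V a))"

lemma extension:
  shows subset_extension: "U \<subseteq> extension U a"
    and extension_good: "good U \<Longrightarrow> |U| <o |P| \<Longrightarrow> a \<in> P \<Longrightarrow>
      good (extension U a) \<and> |extension U a| <o |P| \<and> handled (extension U a) a"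
proof -
  have "\<exists>V. U \<subseteq> V \<and> (good U \<and> |U| <o |P| \<and> a \<in> P \<longrightarrow> good V \<and> |V| <o |P| \<and> handled V a)"
    using extend by (cases "good U \<and> |U| <o |P| \<and> a \<in> P") blast+
  then have "U \<subseteq> extension U a \<and> (good U \<and> |U| <o |P| \<and> a \<in> P \<longrightarrow>
      good (extension U a) \<and> |extension U a| <o |P| \<and> handled (extension U a) a)"
    unfolding extension_def by (rule someI_ex)
  then show "U \<subseteq> extension U a"
    and "good U \<Longrightarrow> |U| <o |P| \<Longrightarrow> a \<in> P \<Longrightarrow>
      good (extension U a) \<and> |extension U a| <o |P| \<and> handled (extension U a) a"
    by blast+
qed

definition stage :: "'a \<Rightarrow> 'b set" where
  "stage = wfrec ( |P| - Id) (\<lambda>f a. extension (U0 \<union> \<Union>(f ` underS |P| a)) a)"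

definition before :: "'a \<Rightarrow> 'b set" where
  "before a = U0 \<union> \<Union>(stage ` underS |P| a)"

lemma wf_card_of: "wf ( |P| - Id)"
  using wo_rel.WF[of "|P|"] card_of_Well_order unfolding wo_rel_def by blast

lemma stage_eq: "stage a = extension (before a) a"
proof -
  have "stage a = extension (U0 \<union> \<Union>(cut stage ( |P| - Id) a ` underS |P| a)) a"
    unfolding stage_def by (subst wfrec[OF wf_card_of]) simp
  moreover have "cut stage ( |P| - Id) a ` underS |P| a = stage ` underS |P| a"
    by (rule image_cong) (auto simp: underS_def cut_apply)
  ultimately show ?thesis unfolding before_def by simp
qed

lemma underS_card_of_subset: "underS |P| a \<subseteq> P"
  by (metis Field_card_of underS_Field subsetI)

lemma before_subset_stage: "before a \<subseteq> stage a"
  using subset_extension by (simp add: stage_eq)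

lemma stage_subset_before: "b \<in> underS |P| a \<Longrightarrow> stage b \<subseteq> before a"
  unfolding before_def by blast

lemma start_subset_stage: "U0 \<subseteq> stage a"
  using before_subset_stage[of a] unfolding before_def by blast

lemma chain_stages:
  assumes "X \<subseteq> P" shows "chain\<^sub>\<subseteq> (insert U0 (stage ` X))"
proof -
  have "stage b \<subseteq> stage c" if "b \<in> underS |P| c" for b c
    using that stage_subset_before before_subset_stage by blast
  moreover have "b \<in> underS |P| c \<or> c \<in> underS |P| b \<or> b = c" if "b \<in> P" "c \<in> P" for b c
    using that wo_rel.TOTALS[of "|P|"] card_of_Well_order
    unfolding wo_rel_def underS_def Field_card_of by blast
  ultimately show ?thesis
    using assms start_subset_stage unfolding chain_subset_def by blast
qed

lemma Cinfinite_card_of: "Cinfinite |P|"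
  using infinite by (simp add: cinfinite_def Field_card_of card_of_card_order_on)

lemma good_before: "a \<in> P \<Longrightarrow> good (before a) \<and> |before a| <o |P|"
proof (induction a rule: wf_induct[OF wf_card_of])
  case (1 a)
  have stage: "good (stage b) \<and> |stage b| <o |P|" if b: "b \<in> underS |P| a" for b
  proof -
    have "b \<in> P" "(b, a) \<in> |P| - Id" using b underS_card_of_subset unfolding underS_def by auto
    then have "good (before b) \<and> |before b| <o |P|" using 1(1) by blast
    then show ?thesis using extension_good \<open>b \<in> P\<close> by (simp add: stage_eq)
  qed
  have "good (\<Union>(insert U0 (stage ` underS |P| a)))"
  proof (rule good_Union)
    show "chain\<^sub>\<subseteq> (insert U0 (stage ` underS |P| a))"
      by (rule chain_stages[OF underS_card_of_subset])
    show "\<forall>X\<in>insert U0 (stage ` underS |P| a). good X" using good_start stage by blast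
  qed simp
  moreover have "|underS |P| a| <o |P|"
    using card_of_underS[OF card_of_Card_order, of a P] 1(2) by (simp add: Field_card_of)
  then have "|\<Union>b\<in>underS |P| a. stage b| <o |P|"
    using regularCard_UNION_bound[OF Cinfinite_card_of regular] stage by blast
  ultimately show ?case
    using card_of_Un_ordLess_infinite[OF infinite small_start] unfolding before_def by simp
qed

theorem exhaustion: "\<exists>R. good R \<and> U0 \<subseteq> R \<and> (\<forall>a\<in>P. handled R a)"
proof (intro exI conjI ballI)
  let ?R = "\<Union>(insert U0 (stage ` P))"
  have stage: "good (stage a) \<and> handled (stage a) a" if "a \<in> P" for a
    using that good_before extension_good by (simp add: stage_eq)
  show "good ?R"
  proof (rule good_Union)
    show "\<forall>X\<in>insert U0 (stage ` P). good X" using good_start stage by blast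
  qed (use chain_stages[of P] in simp_all)
  show "U0 \<subseteq> ?R" by blast
  show "handled ?R a" if "a \<in> P" for a
  proof (rule handled_mono)
    show "handled (stage a) a" using stage that by blast
    show "stage a \<subseteq> ?R" using that by blast
  qed
qed

end

definition partial_inj_hom :: "'a set \<Rightarrow> ('a \<Rightarrow> 'a \<Rightarrow> bool) \<Rightarrow> ('a \<times> 'a) set \<Rightarrow> bool" where
  "partial_inj_hom P r U \<longleftrightarrow> U \<subseteq> P \<times> P \<and>
     (\<forall>x y x' y'. (x, y) \<in> U \<longrightarrow> (x', y') \<in> U \<longrightarrow> (x = x' \<longleftrightarrow> y = y') \<and> (r x x' \<longrightarrow> r y y'))"

lemma partial_inj_hom_insert:
  assumes U: "partial_inj_hom P r U" and "x \<in> P" "y \<in> P" "x \<notin> Domain U" "y \<notin> Range U"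
    and "\<not> r x x"
    and compat: "\<forall>q q'. (q, q') \<in> U \<longrightarrow> (r q x \<longrightarrow> r q' y) \<and> (r x q \<longrightarrow> r y q')"
  shows "partial_inj_hom P r (insert (x, y) U)"
  using assms unfolding partial_inj_hom_def by (auto simp: Domain.simps Range.simps)

lemma partial_inj_hom_Union:
  assumes "chain\<^sub>\<subseteq> \<C>" and "\<forall>U\<in>\<C>. partial_inj_hom P r U"
  shows "partial_inj_hom P r (\<Union>\<C>)"
  unfolding partial_inj_hom_def
proof (intro conjI allI impI)
  show "\<Union>\<C> \<subseteq> P \<times> P" using assms(2) unfolding partial_inj_hom_def by blast
  fix x y x' y' assume "(x, y) \<in> \<Union>\<C>" "(x', y') \<in> \<Union>\<C>"
  then obtain U where "U \<in> \<C>" "(x, y) \<in> U" "(x', y') \<in> U"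
    using assms(1) unfolding chain_subset_def by blast
  then show "x = x' \<longleftrightarrow> y = y'" and "r x x' \<Longrightarrow> r y y'"
    using assms(2) unfolding partial_inj_hom_def by blast+
qed

lemma bij_hom_of_partial_inj_hom:
  assumes R: "partial_inj_hom P r R" and "P \<subseteq> Domain R" and "P \<subseteq> Range R"
  shows "\<exists>F. bij_hom P r F \<and> (\<forall>x y. (x, y) \<in> R \<longrightarrow> F x = y)"
proof (intro exI conjI)
  define F where "F x = (THE y. (x, y) \<in> R)" for x
  have RP: "R \<subseteq> P \<times> P" and inj: "\<And>x y x' y'. (x, y) \<in> R \<Longrightarrow> (x', y') \<in> R \<Longrightarrow> x = x' \<longleftrightarrow> y = y'"
    and hom: "\<And>x y x' y'. (x, y) \<in> R \<Longrightarrow> (x', y') \<in> R \<Longrightarrow> r x x' \<Longrightarrow> r y y'"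
    using R unfolding partial_inj_hom_def by blast+
  have F_eq: "F x = y" if "(x, y) \<in> R" for x y
    unfolding F_def using that inj by blast
  then show "\<forall>x y. (x, y) \<in> R \<longrightarrow> F x = y" by blast
  have graph: "(x, F x) \<in> R" if "x \<in> P" for x
    using that assms(2) F_eq by blast
  have "inj_on F P" using graph inj by (metis inj_onI)
  moreover have "F ` P = P"
  proof
    show "F ` P \<subseteq> P" using graph RP by blast
    show "P \<subseteq> F ` P" using assms(3) RP F_eq by force
  qed
  ultimately show "bij_hom P r F"
    unfolding bij_hom_def bij_betw_def using graph hom by blast
qed

context saturated_poset
begin

lemma partial_inj_hom_extend_Domain:
  assumes U: "partial_inj_hom P r U" and small: "|U| <o |P|" and a: "a \<in> P"
  shows "\<exists>V. U \<subseteq> V \<and> partial_inj_hom P r V \<and> |V| <o |P| \<and> a \<in> Domain V"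
proof (cases "a \<in> Domain U")
  case False
  define L where "L = {y. \<exists>x. (x, y) \<in> U \<and> r x a}"
  define G where "G = {y. \<exists>x. (x, y) \<in> U \<and> r a x}"
  have UP: "U \<subseteq> P \<times> P" using U unfolding partial_inj_hom_def by blast
  have Range: "small_subset P (Range U)" by (rule small_subset_Range[OF UP small])
  then have "small_subset P L" "small_subset P G"
    by (auto intro: small_subset_mono simp: L_def G_def)
  moreover have "set_less r L G"
    unfolding set_less_def
  proof (intro ballI)
    fix u v assume "u \<in> L" "v \<in> G"
    then obtain x x' where "(x, u) \<in> U" "(x', v) \<in> U" "r x a" "r a x'"
      unfolding L_def G_def by blast
    moreover have "r x x'" using calculation UP a less_trans by blast
    ultimately show "r u v" using U unfolding partial_inj_hom_def by blast
  qed
  ultimately obtain y where y: "y \<in> P" "y \<notin> Range U" "set_less r L {y}" "set_less r {y} G"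
    using between_avoiding Range by blast
  have "partial_inj_hom P r (insert (a, y) U)"
  proof (rule partial_inj_hom_insert[OF U a y(1) False y(2) less_irrefl[OF a]])
    show "\<forall>q q'. (q, q') \<in> U \<longrightarrow> (r q a \<longrightarrow> r q' y) \<and> (r a q \<longrightarrow> r y q')"
      using y(3,4) unfolding L_def G_def set_less_def by blast
  qed
  then show ?thesis using ordLess_insert_infinite[OF infinite small] by blast
qed (use assms in blast)

lemma partial_inj_hom_extend_Range:
  assumes U: "partial_inj_hom P r U" and small: "|U| <o |P|" and a: "a \<in> P"
  shows "\<exists>V. U \<subseteq> V \<and> partial_inj_hom P r V \<and> |V| <o |P| \<and> a \<in> Range V"
proof (cases "a \<in> Range U")
  case False
  have UP: "U \<subseteq> P \<times> P" using U unfolding partial_inj_hom_def by blast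
  have "small_subset P (Domain U)" by (rule small_subset_Domain[OF UP small])
  then obtain x where x: "x \<in> P" "x \<notin> Domain U" "\<forall>q\<in>Domain U. incomp r x q"
    using incomparable_avoiding by blast
  have "partial_inj_hom P r (insert (x, a) U)"
  proof (rule partial_inj_hom_insert[OF U x(1) a x(2) False less_irrefl[OF x(1)]])
    show "\<forall>q q'. (q, q') \<in> U \<longrightarrow> (r q x \<longrightarrow> r q' a) \<and> (r x q \<longrightarrow> r a q')"
      using x(3) unfolding incomp_def by blast
  qed
  then show ?thesis using ordLess_insert_infinite[OF infinite small] by blast
qed (use assms in blast)

lemma partial_inj_hom_extend:
  assumes "partial_inj_hom P r U" and "|U| <o |P|" and "a \<in> P"
  shows "\<exists>V. U \<subseteq> V \<and> partial_inj_hom P r V \<and> |V| <o |P| \<and> a \<in> Domain V \<and> a \<in> Range V"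
proof -
  obtain V where V: "U \<subseteq> V" "partial_inj_hom P r V" "|V| <o |P|" "a \<in> Domain V"
    using partial_inj_hom_extend_Domain[OF assms] by blast
  obtain V' where "V \<subseteq> V'" "partial_inj_hom P r V'" "|V'| <o |P|" "a \<in> Range V'"
    using partial_inj_hom_extend_Range[OF V(2,3) assms(3)] by blast
  with V show ?thesis by blast
qed

theorem not_reversible:
  assumes regular: "regularCard |P|"
  shows "\<not> reversible P r"
proof -
  obtain a where a: "a \<in> P" using infinite by (metis finite.emptyI ex_in_conv)
  have "small_subset P {a}" using small_subset_finite[OF infinite] a by blast
  then obtain y z where y: "y \<in> P" "r a y" and z: "z \<in> P" "incomp r z a"
    using u2_witnesses(2,3) by blast
  have "a \<noteq> z" "\<not> r a z" "\<not> r z a" using z(2) unfolding incomp_def by blast+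
  moreover have "a \<noteq> y" "\<not> r a a" "\<not> r z z" using a y z(1) less_irrefl by blast+
  ultimately have U0: "partial_inj_hom P r {(a, a), (z, y)}"
    using a y(1) z(1) unfolding partial_inj_hom_def by auto
  have small_U0: "|{(a, a), (z, y)}| <o |P|"
    by (rule finite_ordLess_infinite_card_of) (simp_all add: infinite)
  interpret transfinite_exhaustion P "partial_inj_hom P r" "\<lambda>V x. x \<in> Domain V \<and> x \<in> Range V"
    "{(a, a), (z, y)}"
  proof unfold_locales
    show "partial_inj_hom P r (\<Union>\<C>)" if "chain\<^sub>\<subseteq> \<C>" "\<forall>U\<in>\<C>. partial_inj_hom P r U" for \<C>
      using partial_inj_hom_Union that by blast
    show "\<exists>V. U \<subseteq> V \<and> partial_inj_hom P r V \<and> |V| <o |P| \<and> x \<in> Domain V \<and> x \<in> Range V"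
      if "partial_inj_hom P r U" "|U| <o |P|" "x \<in> P" for U x
      using partial_inj_hom_extend that by blast
    show "x \<in> Domain V \<and> x \<in> Range V" if "x \<in> Domain U \<and> x \<in> Range U" "U \<subseteq> V"
      for U V :: "('a \<times> 'a) set" and x
      using that by blast
  qed (fact infinite regular U0 small_U0)+
  obtain R where R: "partial_inj_hom P r R" "{(a, a), (z, y)} \<subseteq> R" "P \<subseteq> Domain R" "P \<subseteq> Range R"
    using exhaustion by blast
  obtain F where F: "bij_hom P r F" "\<forall>x y. (x, y) \<in> R \<longrightarrow> F x = y"
    using bij_hom_of_partial_inj_hom[OF R(1,3,4)] by blast
  have "F a = a" "F z = y" using F(2) R(2) by blast+
  have "\<not> automorphism P r F"
  proof
    assume "automorphism P r F"
    then have "r a z \<longleftrightarrow> r (F a) (F z)" using a z(1) unfolding automorphism_def by blast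
    then show False using \<open>F a = a\<close> \<open>F z = y\<close> y(2) \<open>\<not> r a z\<close> by simp
  qed
  with F(1) show ?thesis unfolding reversible_def by blast
qed

end

definition one_point_extension ::
    "('a \<Rightarrow> 'a \<Rightarrow> bool) \<Rightarrow> 'a set \<Rightarrow> 'a set \<Rightarrow> 'a set \<Rightarrow> 'a \<Rightarrow> 'a \<Rightarrow> 'a \<Rightarrow> bool" where
  "one_point_extension r A Lo Hi x u v \<longleftrightarrow>
     (u \<in> A \<and> v \<in> A \<and> r u v) \<or> (u \<in> Lo \<and> v = x) \<or> (u = x \<and> v \<in> Hi)"

lemma strict_po_subset: "strict_po P r \<Longrightarrow> A \<subseteq> P \<Longrightarrow> strict_po A r"
  unfolding strict_po_def by blast

lemma strict_po_one_point_extension: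
  assumes po: "strict_po A r" and x: "x \<notin> A" and "Lo \<subseteq> A" and "Hi \<subseteq> A"
    and down: "\<forall>u\<in>A. \<forall>v\<in>Lo. r u v \<longrightarrow> u \<in> Lo" and up: "\<forall>u\<in>Hi. \<forall>v\<in>A. r u v \<longrightarrow> v \<in> Hi"
    and Lo_Hi: "set_less r Lo Hi"
  shows "strict_po (insert x A) (one_point_extension r A Lo Hi x)"
  unfolding strict_po_def
proof (intro conjI ballI impI)
  fix u assume "u \<in> insert x A"
  show "\<not> one_point_extension r A Lo Hi x u u"
    using po assms(2-4) unfolding strict_po_def one_point_extension_def by blast
next
  fix u v w assume "u \<in> insert x A" "v \<in> insert x A" "w \<in> insert x A"
    and "one_point_extension r A Lo Hi x u v" "one_point_extension r A Lo Hi x v w"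
  then show "one_point_extension r A Lo Hi x u w"
    using po assms(2-) unfolding strict_po_def one_point_extension_def set_less_def by blast
qed


text \<open>Universality embeds the one-point extension of A realising the cut (Lo, Hi); homogeneity
  moves the embedded copy of A back onto A, and the preimage of the new point realises the cut.\<close>
lemma homogeneous_universal_realizes_cut:
  assumes po: "strict_po P r" and hu: "homogeneous_universal P r"
    and A: "small_subset P A" and "Lo \<subseteq> A" and "Hi \<subseteq> A"
    and "\<forall>u\<in>A. \<forall>v\<in>Lo. r u v \<longrightarrow> u \<in> Lo" and "\<forall>u\<in>Hi. \<forall>v\<in>A. r u v \<longrightarrow> v \<in> Hi"
    and "set_less r Lo Hi"
  shows "\<exists>x\<in>P. x \<notin> A \<and> (\<forall>a\<in>A. r a x \<longleftrightarrow> a \<in> Lo) \<and> (\<forall>a\<in>A. r x a \<longleftrightarrow> a \<in> Hi)"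
proof -
  have AP: "A \<subseteq> P" using A unfolding small_subset_def by blast
  obtain x0 where x0: "x0 \<in> P" "x0 \<notin> A" using ex_not_in_small_subset[OF A] by blast
  let ?s = "one_point_extension r A Lo Hi x0"
  have "strict_po (insert x0 A) ?s"
    using strict_po_one_point_extension[OF strict_po_subset[OF po AP] x0(2)] assms(4-) by blast
  moreover have "|insert x0 A| \<le>o |P|" using x0(1) AP by (simp add: card_of_mono1)
  ultimately obtain g where g: "order_embedding (insert x0 A) ?s P r g"
    using hu unfolding homogeneous_universal_def by blast
  then have g_inj: "inj_on g (insert x0 A)" and gP: "g ` insert x0 A \<subseteq> P"
    and g_iff: "\<forall>u\<in>insert x0 A. \<forall>v\<in>insert x0 A. ?s u v \<longleftrightarrow> r (g u) (g v)"
    unfolding order_embedding_def by blast+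
  have s_A: "?s u v \<longleftrightarrow> r u v" if "u \<in> A" "v \<in> A" for u v
    using that x0(2) unfolding one_point_extension_def by blast
  have "sub_iso r A (g ` A) g"
    unfolding sub_iso_def bij_betw_def using g_inj g_iff s_A by (auto intro: inj_on_subset)
  moreover have "small_subset P (g ` A)"
    using A gP ordLeq_ordLess_trans[OF card_of_image] unfolding small_subset_def by blast
  ultimately obtain F where F: "automorphism P r F" "\<forall>a\<in>A. F a = g a"
    using hu A unfolding homogeneous_universal_def by blast
  then have F_bij: "bij_betw F P P" and F_iff: "\<forall>p\<in>P. \<forall>q\<in>P. r p q \<longleftrightarrow> r (F p) (F q)"
    unfolding automorphism_def by blast+
  define x where "x = inv_into P F (g x0)"
  have "g x0 \<in> P" using gP by blast
  then have x: "x \<in> P" "F x = g x0"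
    unfolding x_def using F_bij by (auto simp: bij_betw_def inv_into_into f_inv_into_f)
  show ?thesis
  proof (intro bexI conjI ballI)
    show "x \<notin> A"
    proof
      assume "x \<in> A"
      then have "g x = g x0" using F(2) x(2) by simp
      then show False using g_inj \<open>x \<in> A\<close> x0(2) unfolding inj_on_def by blast
    qed
    fix a assume a: "a \<in> A"
    have "r a x \<longleftrightarrow> r (g a) (g x0)" using F_iff F(2) a AP x by auto
    also have "\<dots> \<longleftrightarrow> a \<in> Lo" using g_iff a x0(2) unfolding one_point_extension_def by auto
    finally show "r a x \<longleftrightarrow> a \<in> Lo" .
    have "r x a \<longleftrightarrow> r (g x0) (g a)" using F_iff F(2) a AP x by auto
    also have "\<dots> \<longleftrightarrow> a \<in> Hi" using g_iff a x0(2) unfolding one_point_extension_def by auto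
    finally show "r x a \<longleftrightarrow> a \<in> Hi" .
  qed (rule x(1))
qed


lemma homogeneous_universal_cond_u1:
  assumes po: "strict_po P r" and "infinite P" and hu: "homogeneous_universal P r"
  shows "cond_u1 P r"
  unfolding cond_u1_def
proof (intro allI impI)
  fix L G assume "small_subset P L \<and> small_subset P G \<and> L \<noteq> {} \<and> G \<noteq> {} \<and> set_less r L G"
  then have L: "small_subset P L" and G: "small_subset P G" and LG: "set_less r L G" by blast+
  have "L \<subseteq> P" "G \<subseteq> P" using L G unfolding small_subset_def by blast+
  text \<open>L and G are disjoint, so L is downward and G upward closed in L \<union> G.\<close>
  then have closed: "\<forall>u\<in>L \<union> G. \<forall>v\<in>L. r u v \<longrightarrow> u \<in> L" "\<forall>u\<in>G. \<forall>v\<in>L \<union> G. r u v \<longrightarrow> v \<in> G"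
    using po LG unfolding strict_po_def set_less_def by blast+
  obtain x where "x \<in> P" "\<forall>a\<in>L \<union> G. r a x \<longleftrightarrow> a \<in> L" "\<forall>a\<in>L \<union> G. r x a \<longleftrightarrow> a \<in> G"
    using homogeneous_universal_realizes_cut[OF po hu small_subset_Un[OF assms(2) L G] _ _ closed LG]
    by blast
  then show "\<exists>x\<in>P. set_less r L {x} \<and> set_less r {x} G"
    unfolding set_less_def by blast
qed

lemma homogeneous_universal_cond_u2:
  assumes po: "strict_po P r" and hu: "homogeneous_universal P r"
  shows "cond_u2 P r"
  unfolding cond_u2_def
proof (intro allI impI)
  fix K assume "small_subset P K \<and> K \<noteq> {}"
  then have K: "small_subset P K" by blast
  note realizes = homogeneous_universal_realizes_cut[OF po hu K]
  obtain x where "x \<in> P" "\<forall>k\<in>K. r x k"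
    using realizes[of "{}" K] by (auto simp: set_less_def)
  moreover obtain y where "y \<in> P" "\<forall>k\<in>K. r k y"
    using realizes[of K "{}"] by (auto simp: set_less_def)
  moreover obtain z where "z \<in> P" "\<forall>k\<in>K. incomp r z k"
    using realizes[of "{}" "{}"] by (auto simp: set_less_def incomp_def)
  ultimately show "\<exists>x\<in>P. \<exists>y\<in>P. \<exists>z\<in>P. set_less r {x} K \<and> set_less r K {y} \<and> (\<forall>k\<in>K. incomp r z k)"
    unfolding set_less_def by blast
qed

theorem theorem3p5:
  fixes P :: "'a set" and r :: "'a \<Rightarrow> 'a \<Rightarrow> bool"
  assumes "strict_po P r" and "infinite P"
  shows "(cond_u1 P r \<and> cond_u2 P r \<longrightarrow>
           (\<forall>L G K. small_subset P L \<and> small_subset P G \<and> small_subset P K \<and>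
               L \<noteq> {} \<and> G \<noteq> {} \<and> K \<noteq> {} \<and> set_less r L G \<longrightarrow>
               (card_of {x\<in>P. set_less r L {x} \<and> set_less r {x} G}, card_of P) \<in> ordIso \<and>
               (card_of {x\<in>P. set_less r {x} K}, card_of P) \<in> ordIso \<and>
               (card_of {x\<in>P. set_less r K {x}}, card_of P) \<in> ordIso \<and>
               (card_of {x\<in>P. \<forall>k\<in>K. incomp r x k}, card_of P) \<in> ordIso) \<and>
           (regularCard (card_of P) \<longrightarrow> \<not> reversible P r))
       \<and> (regularCard (card_of P) \<and> homogeneous_universal P r \<longrightarrow> \<not> reversible P r)"
proof (intro conjI impI allI)
  assume "cond_u1 P r \<and> cond_u2 P r"
  then interpret saturated_poset P r using assms by unfold_locales blast+
  show "\<not> reversible P r" if "regularCard |P|" using not_reversible[OF that] .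
  fix L G K
  assume "small_subset P L \<and> small_subset P G \<and> small_subset P K \<and>
    L \<noteq> {} \<and> G \<noteq> {} \<and> K \<noteq> {} \<and> set_less r L G"
  then show "|{x\<in>P. set_less r L {x} \<and> set_less r {x} G}| =o |P|"
    and "|{x\<in>P. set_less r {x} K}| =o |P|" and "|{x\<in>P. set_less r K {x}}| =o |P|"
    and "|{x\<in>P. \<forall>k\<in>K. incomp r x k}| =o |P|"
    using card_between card_below card_above card_incomparable by blast+
next
  assume hu: "regularCard |P| \<and> homogeneous_universal P r"
  interpret saturated_poset P r
    using assms homogeneous_universal_cond_u1 homogeneous_universal_cond_u2 hu
    by unfold_locales blast+
  show "\<not> reversible P r" using not_reversible hu by blast
qed

end
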